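(* Let $R$ be a commutative ring with $1$, let $A$ and $B$ be $R$-algebras, let $C,J$ be two-sided ideals of $A$, let $I$ be a two-sided ideal of $C$ (viewed as a possibly non-unital ring) and $K$ a two-sided ideal of $B$, and let $f:C\to B$ and $g:B\to C+J$ be $R$-linear maps. Assume: (1) $(C\cap J)C\subseteq I$, $C(C\cap J)\subseteq I$ and $I\subseteq C\cap J$; (2) $g(K)\subseteq J$; (3) $f(I)\subseteq K$; (4) $f$ is surjective; (5) $g$ sends idempotents to idempotents; (6) the $R$-linear maps $\overline f:C/I\to B/K$ and $\overline g:B/K\to(C+J)/J$ induced by $f$ and $g$ are multiplicative, i.e. $\overline f(xy)=\overline f(x)\overline f(y)$ and $\overline g(vw)=\overline g(v)\overline g(w)$ for all $x,y\in C/I$, $v,w\in B/K$; (7) the natural isomorphism $s:C/(C\cap J)\to(C+J)/J$ and the natural projection $q:C/I\to C/(C\cap J)$ satisfy $sq=\overline g\,\overline f$; (8) every idempotent of $A$ has a decomposition as a finite sum of pairwise orthogonal local idempotents, unique up to conjugation. Let $b\in B$ be a local idempotent with $b\notin K$. Then $g(b)\in C+J\subseteq A$ and, by (5) and (8), there are a unique $n\in\mathbb N$ and a set $\{a_0,\dots,a_n\}\subseteq A$ of pairwise orthogonal local idempotents, unique up to conjugation, with $g(b)=\sum_{i=0}^na_i$. There is exactly one $j\in\{0,\dots,n\}$ with $a_j\in C\setminus(C\cap J)$, and $a:=a_j$ satisfies $g(b)\equiv a\pmod J$ and $f(a)\equiv b\pmod K$.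
   Context: An idempotent $e$ of a ring $D$ is local if $eDe$ is a local ring. Idempotents $e,e'$ are orthogonal if $ee'=e'e=0$. *)

theory Defs
  imports Main "HOL-Combinatorics.Permutations"
begin

definition is_algebra :: "('r::comm_ring_1 \<Rightarrow> 'a::ring_1 \<Rightarrow> 'a) \<Rightarrow> bool" where
  "is_algebra sm \<longleftrightarrow>
     (\<forall>r s x. sm (r + s) x = sm r x + sm s x) \<and>
     (\<forall>r x y. sm r (x + y) = sm r x + sm r y) \<and>
     (\<forall>r s x. sm (r * s) x = sm r (sm s x)) \<and>
     (\<forall>x. sm 1 x = x) \<and>
     (\<forall>r x y. sm r (x * y) = sm r x * y) \<and>
     (\<forall>r x y. sm r (x * y) = x * sm r y)"

definition linear_on ::
  "('r \<Rightarrow> 'a \<Rightarrow> 'a) \<Rightarrow> ('r \<Rightarrow> 'b \<Rightarrow> 'b) \<Rightarrow> 'a::ab_group_add set \<Rightarrow> ('a \<Rightarrow> 'b::ab_group_add) \<Rightarrow> bool" where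
  "linear_on smA smB S h \<longleftrightarrow>
     (\<forall>x\<in>S. \<forall>y\<in>S. h (x + y) = h x + h y) \<and>
     (\<forall>r. \<forall>x\<in>S. h (smA r x) = smB r (h x))"

definition two_sided_ideal :: "'a::ring_1 set \<Rightarrow> bool" where
  "two_sided_ideal I \<longleftrightarrow> 0 \<in> I \<and>
     (\<forall>x\<in>I. \<forall>y\<in>I. x + y \<in> I) \<and> (\<forall>x\<in>I. - x \<in> I) \<and>
     (\<forall>a. \<forall>x\<in>I. a * x \<in> I \<and> x * a \<in> I)"

text \<open>Two-sided ideal I of the (possibly non-unital) R-subalgebra C; it is
  also required to be an R-submodule, so that C/I is an R-module.\<close>
definition ideal_of_sub :: "('r \<Rightarrow> 'a \<Rightarrow> 'a) \<Rightarrow> 'a::ring_1 set \<Rightarrow> 'a set \<Rightarrow> bool" where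
  "ideal_of_sub sm C I \<longleftrightarrow> I \<subseteq> C \<and> 0 \<in> I \<and>
     (\<forall>x\<in>I. \<forall>y\<in>I. x + y \<in> I) \<and> (\<forall>x\<in>I. - x \<in> I) \<and>
     (\<forall>c\<in>C. \<forall>x\<in>I. c * x \<in> I \<and> x * c \<in> I) \<and>
     (\<forall>r. \<forall>x\<in>I. sm r x \<in> I)"

definition set_plus_ring :: "'a::ring_1 set \<Rightarrow> 'a set \<Rightarrow> 'a set" where
  "set_plus_ring C J = {c + j | c j. c \<in> C \<and> j \<in> J}"

definition idem :: "'a::ring_1 \<Rightarrow> bool" where
  "idem e \<longleftrightarrow> e * e = e"

text \<open>Units of the corner ring eDe (with identity e).\<close>
definition corner_unit :: "'a::ring_1 \<Rightarrow> 'a \<Rightarrow> bool" where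
  "corner_unit e x \<longleftrightarrow> (\<exists>y. y = e * y * e \<and> x * y = e \<and> y * x = e)"

text \<open>e is a local idempotent: eDe is a local ring, i.e. e \<noteq> 0 and the
  non-units of eDe are closed under addition.\<close>
definition local_idem :: "'a::ring_1 \<Rightarrow> bool" where
  "local_idem e \<longleftrightarrow> e * e = e \<and> e \<noteq> 0 \<and>
     (\<forall>x y. x = e * x * e \<longrightarrow> y = e * y * e \<longrightarrow>
        \<not> corner_unit e x \<longrightarrow> \<not> corner_unit e y \<longrightarrow> \<not> corner_unit e (x + y))"

definition local_decomp :: "'a::ring_1 \<Rightarrow> 'a list \<Rightarrow> bool" where
  "local_decomp e as \<longleftrightarrow>
     (\<forall>i<length as. local_idem (as ! i)) \<and>
     (\<forall>i<length as. \<forall>j<length as. i \<noteq> j \<longrightarrow> as ! i * as ! j = 0) \<and>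
     sum_list as = e"

definition krull_schmidt_idems :: "'a::ring_1 itself \<Rightarrow> bool" where
  "krull_schmidt_idems _ \<longleftrightarrow> (\<forall>e::'a. idem e \<longrightarrow>
     (\<exists>as. local_decomp e as) \<and>
     (\<forall>as bs. local_decomp e as \<longrightarrow> local_decomp e bs \<longrightarrow>
        length as = length bs \<and>
        (\<exists>u v \<sigma>. u * v = 1 \<and> v * u = 1 \<and> \<sigma> permutes {..<length as} \<and>
           (\<forall>i<length as. bs ! (\<sigma> i) = u * as ! i * v))))"

end

theory Submission
  imports Defs
begin

text \<open>
  Write \<open>e = g b\<close> and let \<open>a\<close> be a summand of a decomposition of \<open>e\<close> that is not in \<open>J\<close>
  (one exists, because \<open>g\<close> reflects \<open>K\<close> into \<open>J\<close> and \<open>b \<notin> K\<close>). A local idempotent in the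
  ideal \<open>C + J\<close> lies in \<open>C\<close> or in \<open>J\<close>, so \<open>a \<in> C\<close>. The element \<open>x = b f(a) b\<close> of the
  local ring \<open>bBb\<close> satisfies \<open>g x \<equiv> e a e = a (mod J)\<close>. Either \<open>x\<close> or \<open>b - x\<close> is a unit
  of \<open>bBb\<close>; applying \<open>g\<close> to the inverse shows in the first case \<open>e \<equiv> a\<close> and in the second
  \<open>a \<equiv> 0 (mod J)\<close>, which is excluded. Orthogonality then puts every other summand
  \<open>a\<^sub>k = a\<^sub>k (e - a)\<close> into \<open>J\<close>, and \<open>g (f a - b) \<equiv> a - e \<equiv> 0\<close> gives \<open>f a \<equiv> b (mod K)\<close>.
\<close>

lemma two_sided_ideal_zero: "two_sided_ideal L \<Longrightarrow> 0 \<in> L"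
  and two_sided_ideal_add: "two_sided_ideal L \<Longrightarrow> x \<in> L \<Longrightarrow> y \<in> L \<Longrightarrow> x + y \<in> L"
  and two_sided_ideal_uminus: "two_sided_ideal L \<Longrightarrow> x \<in> L \<Longrightarrow> - x \<in> L"
  and two_sided_ideal_mult_left: "two_sided_ideal L \<Longrightarrow> x \<in> L \<Longrightarrow> a * x \<in> L"
  and two_sided_ideal_mult_right: "two_sided_ideal L \<Longrightarrow> x \<in> L \<Longrightarrow> x * a \<in> L"
  unfolding two_sided_ideal_def by blast+

lemma two_sided_ideal_diff: "two_sided_ideal L \<Longrightarrow> x \<in> L \<Longrightarrow> y \<in> L \<Longrightarrow> x - y \<in> L"
  using two_sided_ideal_add[of L x "- y"] two_sided_ideal_uminus[of L y] by simp

lemma two_sided_ideal_diff_trans: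
  "two_sided_ideal L \<Longrightarrow> x - y \<in> L \<Longrightarrow> y - z \<in> L \<Longrightarrow> x - z \<in> L"
  using two_sided_ideal_add[of L "x - y" "y - z"] by simp

lemma two_sided_ideal_sum_list:
  "two_sided_ideal L \<Longrightarrow> set xs \<subseteq> L \<Longrightarrow> sum_list xs \<in> L"
  by (induction xs) (auto intro: two_sided_ideal_add two_sided_ideal_zero)

lemma set_plus_ring_mult_left:
  assumes "two_sided_ideal C" "two_sided_ideal J" "x \<in> set_plus_ring C J"
  shows "a * x \<in> set_plus_ring C J"
proof -
  obtain c j where "x = c + j" "c \<in> C" "j \<in> J"
    using assms(3) unfolding set_plus_ring_def by blast
  then have "a * x = a * c + a * j" "a * c \<in> C" "a * j \<in> J"
    using assms(1,2) by (auto simp: distrib_left intro: two_sided_ideal_mult_left)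
  then show ?thesis unfolding set_plus_ring_def by blast
qed

lemma local_decomp_absorb:
  assumes "local_decomp e as" "i < length as"
  shows "as ! i * e = as ! i" "e * as ! i = as ! i"
proof -
  let ?N = "{0..<length as}"
  have e: "e = (\<Sum>k\<in>?N. as ! k)"
    using assms(1) unfolding local_decomp_def by (simp add: sum_list_sum_nth)
  have idem: "as ! i * as ! i = as ! i"
    using assms unfolding local_decomp_def local_idem_def by blast
  have orth: "as ! i * as ! k = 0" "as ! k * as ! i = 0" if "k \<in> ?N - {i}" for k
    using assms that unfolding local_decomp_def by auto
  have i: "i \<in> ?N" using assms(2) by simp
  have "as ! i * e = as ! i * as ! i + (\<Sum>k\<in>?N - {i}. as ! i * as ! k)"
    unfolding e sum_distrib_left using sum.remove[OF _ i] by simp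
  with idem orth(1) show "as ! i * e = as ! i" by simp
  have "e * as ! i = as ! i * as ! i + (\<Sum>k\<in>?N - {i}. as ! k * as ! i)"
    unfolding e sum_distrib_right using sum.remove[OF _ i] by simp
  with idem orth(2) show "e * as ! i = as ! i" by simp
qed

lemma corner_unit_self: "e * e = e \<Longrightarrow> corner_unit e e"
  unfolding corner_unit_def by (metis mult.assoc)

lemma corner_unit_mem_ideal:
  "two_sided_ideal L \<Longrightarrow> corner_unit e x \<Longrightarrow> x \<in> L \<Longrightarrow> e \<in> L"
  unfolding corner_unit_def by (metis two_sided_ideal_mult_right)

lemma local_idem_corner_unit_summand:
  assumes "local_idem e" "x = e * x * e" "y = e * y * e" "x + y = e"
  shows "corner_unit e x \<or> corner_unit e y"
  using assms corner_unit_self[of e] unfolding local_idem_def by metis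

lemma local_idem_mem_ideal_sum:
  assumes C: "two_sided_ideal C" and J: "two_sided_ideal J"
    and a: "local_idem a" "a \<in> set_plus_ring C J"
  shows "a \<in> C \<or> a \<in> J"
proof -
  obtain c j where cj: "a = c + j" "c \<in> C" "j \<in> J"
    using a(2) unfolding set_plus_ring_def by blast
  have aa: "a * a = a" using a(1) unfolding local_idem_def by blast
  have "a * c * a + a * j * a = a * a * a" by (simp add: cj(1) algebra_simps)
  with aa have "a * c * a + a * j * a = a" by simp
  moreover have "a * c * a = a * (a * c * a) * a" "a * j * a = a * (a * j * a) * a"
    using aa by (metis mult.assoc)+
  ultimately have "corner_unit a (a * c * a) \<or> corner_unit a (a * j * a)"
    using local_idem_corner_unit_summand[OF a(1)] by metis
  moreover have "a * c * a \<in> C" "a * j * a \<in> J"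
    using cj C J by (auto intro: two_sided_ideal_mult_left two_sided_ideal_mult_right)
  ultimately show ?thesis using corner_unit_mem_ideal C J by metis
qed

locale idempotent_lifting =
  fixes C J I :: "'a::ring_1 set" and K :: "'b::ring_1 set"
    and f :: "'a \<Rightarrow> 'b" and g :: "'b \<Rightarrow> 'a"
  assumes C_ideal: "two_sided_ideal C" and J_ideal: "two_sided_ideal J"
    and K_ideal: "two_sided_ideal K"
    and g_add: "\<And>v w. g (v + w) = g v + g w"
    and g_range: "\<And>v. g v \<in> set_plus_ring C J"
    and CJ_mult_in_I: "\<And>x c. x \<in> C \<inter> J \<Longrightarrow> c \<in> C \<Longrightarrow> x * c \<in> I"
    and f_I: "\<And>x. x \<in> I \<Longrightarrow> f x \<in> K"
    and f_surj: "f ` C = UNIV"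
    and f_mult: "\<And>x y. x \<in> C \<Longrightarrow> y \<in> C \<Longrightarrow> f (x * y) - f x * f y \<in> K"
    and g_mult: "\<And>v w. g (v * w) - g v * g w \<in> J"
    and g_f: "\<And>c. c \<in> C \<Longrightarrow> g (f c) - c \<in> J"
begin

lemma g_diff: "g (v - w) = g v - g w"
  using g_add[of "v - w" w] by (simp add: algebra_simps)

lemma mem_K_if_g_mem_J:
  assumes "g v \<in> J"
  shows "v \<in> K"
proof -
  obtain x where x: "x \<in> C" "v = f x" using f_surj by (metis UNIV_I imageE)
  obtain u where u: "u \<in> C" "f u = 1" using f_surj by (metis UNIV_I imageE)
  have "g (f x) - (g (f x) - x) \<in> J"
    using assms x g_f two_sided_ideal_diff[OF J_ideal] by blast
  then have "x * u \<in> I" using x u CJ_mult_in_I by simp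
  then have "f (x * u) - (f (x * u) - f x * f u) \<in> K"
    using f_I f_mult x u two_sided_ideal_diff[OF K_ideal] by blast
  then show ?thesis using x u by simp
qed

lemma g_mult3: "g (u * v * w) - g u * g v * g w \<in> J"
proof -
  have "g (u * v) * g w - g u * g v * g w \<in> J"
    using two_sided_ideal_mult_right[OF J_ideal g_mult] by (simp add: left_diff_distrib)
  then show ?thesis by (rule two_sided_ideal_diff_trans[OF J_ideal g_mult])
qed

lemma g_right_inverse:
  assumes "g z - w \<in> J" "z * y = b"
  shows "g b - w * g y \<in> J"
proof -
  have "g z * g y - w * g y \<in> J"
    using two_sided_ideal_mult_right[OF J_ideal assms(1)] by (simp add: left_diff_distrib)
  then show ?thesis using two_sided_ideal_diff_trans[OF J_ideal g_mult[of z y]] assms(2) by simp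
qed

lemma local_image_dichotomy:
  assumes b: "local_idem b" and e: "g b * g b = g b"
    and a: "a * a = a" "a * g b = a" "g b * a = a"
    and x: "x = b * x * b" "g x - a \<in> J"
  shows "g b - a \<in> J \<or> a \<in> J"
proof -
  have bb: "b * b = b" using b unfolding local_idem_def by blast
  have "b - x = b * (b - x) * b" using bb x(1) by (simp add: algebra_simps)
  then have "corner_unit b x \<or> corner_unit b (b - x)"
    using local_idem_corner_unit_summand[OF b x(1)] by simp
  then show ?thesis
  proof
    assume "corner_unit b x"
    then obtain y where "x * y = b" unfolding corner_unit_def by blast
    then have "(g b - a) * (g b - a * g y) \<in> J"
      using g_right_inverse[OF x(2)] two_sided_ideal_mult_left[OF J_ideal] by blast
    moreover have "(g b - a) * (g b - a * g y) = g b - a"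
      using e a by (simp add: algebra_simps flip: mult.assoc)
    ultimately show ?thesis by simp
  next
    assume "corner_unit b (b - x)"
    then obtain y where "(b - x) * y = b" unfolding corner_unit_def by blast
    moreover have "g (b - x) - (g b - a) \<in> J"
      using x(2) two_sided_ideal_uminus[OF J_ideal] by (fastforce simp: g_diff)
    ultimately have "a * (g b - (g b - a) * g y) \<in> J"
      using g_right_inverse two_sided_ideal_mult_left[OF J_ideal] by blast
    moreover have "a * (g b - (g b - a) * g y) = a"
      using a by (simp add: algebra_simps flip: mult.assoc)
    ultimately show ?thesis by simp
  qed
qed

lemma distinguished_summand:
  assumes b: "local_idem b" "b \<notin> K" and e: "g b * g b = g b"
    and as: "local_decomp (g b) as"
  shows "\<exists>j<length as. as ! j \<in> C \<and> as ! j \<notin> C \<inter> J \<and>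
           (\<forall>k<length as. as ! k \<in> C \<and> as ! k \<notin> C \<inter> J \<longrightarrow> k = j) \<and>
           g b - as ! j \<in> J \<and> f (as ! j) - b \<in> K"
proof -
  have "\<not> set as \<subseteq> J"
    using as b(2) mem_K_if_g_mem_J two_sided_ideal_sum_list[OF J_ideal]
    unfolding local_decomp_def by metis
  then obtain i where i: "i < length as" "as ! i \<notin> J" by (metis in_set_conv_nth subsetI)
  define a where "a = as ! i"
  have a_local: "local_idem a" using as i unfolding local_decomp_def a_def by blast
  then have aa: "a * a = a" unfolding local_idem_def by blast
  have ae: "a * g b = a" and ea: "g b * a = a"
    using local_decomp_absorb[OF as i(1)] by (simp_all add: a_def)
  have "a \<in> set_plus_ring C J"
    using set_plus_ring_mult_left[OF C_ideal J_ideal g_range] ae by metis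
  then have aC: "a \<in> C"
    using local_idem_mem_ideal_sum[OF C_ideal J_ideal a_local] i(2) a_def by blast
  have "g b * (g (f a) - a) * g b \<in> J"
    using g_f[OF aC] two_sided_ideal_mult_left[OF J_ideal] two_sided_ideal_mult_right[OF J_ideal]
    by blast
  then have "g (b * f a * b) - g b * a * g b \<in> J"
    using two_sided_ideal_diff_trans[OF J_ideal g_mult3] by (simp add: algebra_simps)
  then have "g (b * f a * b) - a \<in> J" using ae ea by simp
  moreover have "b * f a * b = b * (b * f a * b) * b"
    using b(1) unfolding local_idem_def by (metis mult.assoc)
  ultimately have eJ: "g b - a \<in> J"
    using local_image_dichotomy[OF b(1) e aa ae ea] i(2) a_def by blast
  have unique: "k = i" if k: "k < length as" "as ! k \<notin> J" for k
  proof (rule ccontr)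
    assume "k \<noteq> i"
    then have "as ! k * a = 0" using as k i unfolding local_decomp_def a_def by blast
    then have "as ! k * (g b - a) = as ! k"
      using local_decomp_absorb(1)[OF as k(1)] by (simp add: algebra_simps)
    with k(2) show False using two_sided_ideal_mult_left[OF J_ideal eJ] by metis
  qed
  have "g (f a - b) \<in> J"
    using two_sided_ideal_diff[OF J_ideal g_f[OF aC] eJ] by (simp add: g_diff)
  then have "f a - b \<in> K" by (rule mem_K_if_g_mem_J)
  then show ?thesis using i aC eJ unique a_def by blast
qed

end

theorem proposition4p7:
  fixes smA :: "'r::comm_ring_1 \<Rightarrow> 'a::ring_1 \<Rightarrow> 'a"
    and smB :: "'r \<Rightarrow> 'b::ring_1 \<Rightarrow> 'b"
    and C J I :: "'a set" and K :: "'b set"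
    and f :: "'a \<Rightarrow> 'b" and g :: "'b \<Rightarrow> 'a"
    and b :: 'b
  assumes algA: "is_algebra smA" and algB: "is_algebra smB"
    and C_ideal: "two_sided_ideal C" and J_ideal: "two_sided_ideal J"
    and I_ideal: "ideal_of_sub smA C I" and K_ideal: "two_sided_ideal K"
    and f_lin: "linear_on smA smB C f"
    and g_lin: "linear_on smB smA UNIV g"
    and g_range: "\<forall>v. g v \<in> set_plus_ring C J"
    and h1a: "\<forall>x\<in>C \<inter> J. \<forall>c\<in>C. x * c \<in> I"
    and h1b: "\<forall>c\<in>C. \<forall>x\<in>C \<inter> J. c * x \<in> I"
    and h1c: "I \<subseteq> C \<inter> J"
    and h2: "\<forall>k\<in>K. g k \<in> J"
    and h3: "\<forall>x\<in>I. f x \<in> K"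
    and h4: "f ` C = UNIV"
    and h5: "\<forall>e. idem e \<longrightarrow> idem (g e)"
    and h6f: "\<forall>x\<in>C. \<forall>y\<in>C. f (x * y) - f x * f y \<in> K"
    and h6g: "\<forall>v w. g (v * w) - g v * g w \<in> J"
    and h7: "\<forall>c\<in>C. g (f c) - c \<in> J"
    and h8: "krull_schmidt_idems TYPE('a)"
    and b_local: "local_idem b" and b_notK: "b \<notin> K"
  shows "g b \<in> set_plus_ring C J \<and>
         (\<exists>as. local_decomp (g b) as) \<and>
         (\<forall>as. local_decomp (g b) as \<longrightarrow>
            (\<exists>j<length as. as ! j \<in> C \<and> as ! j \<notin> C \<inter> J \<and>
               (\<forall>k<length as. as ! k \<in> C \<and> as ! k \<notin> C \<inter> J \<longrightarrow> k = j) \<and>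
               g b - as ! j \<in> J \<and> f (as ! j) - b \<in> K))"
proof -
  interpret idempotent_lifting C J I K f g
    using C_ideal J_ideal K_ideal g_lin g_range h1a h3 h4 h6f h6g h7
    by unfold_locales (auto simp: linear_on_def)
  have e: "g b * g b = g b"
    using h5 b_local unfolding idem_def local_idem_def by blast
  then have "\<exists>as. local_decomp (g b) as"
    using h8 unfolding krull_schmidt_idems_def idem_def by blast
  then show ?thesis
    using g_range distinguished_summand[OF b_local b_notK e] by blast
qed

end
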